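(* Let $G\in\mathcal{P}_1(\Theta)$ be such that $\operatorname{supp}(G)$ is a non-degenerate interval. Then $G$ has a regular SBA. Furthermore, for every $n\in\mathbb{N}$ the intervals $\bar\Theta_{n,1},\ldots,\bar\Theta_{n,2^n}$ are non-degenerate and form a partition of $\operatorname{supp}(G)$.
   Context: $\Theta\subseteq\mathbb{R}$ is $\mathbb{R}$, a closed half-line, or a compact interval with nonempty interior. $\mathcal{P}_1(\Theta)$: Borel probability measures on $\Theta$ with finite first moment; $G$ is identified with its distribution function. $b_G(a_1,a_2]=\int_{(a_1,a_2]}\theta\,dG/(G(a_2)-G(a_1))$ if $G(a_2)>G(a_1)$, else $a_1$. SBA: $\mu_{1,1}=\int\theta\,dG$; for $j\ge2$, $\mu_{j,2l}=\mu_{j-1,l}$ ($1\le l\le 2^{j-1}-1$), $\mu_{j,2l-1}=b_G(\mu_{j-1,l-1},\mu_{j-1,l}]$ ($1\le l\le 2^{j-1}$), with $\mu_{j,0}=\inf\Theta$, $\mu_{j,2^j}=\sup\Theta$. $G$ has a regular level $n$ SBA if $\mu_{n,1},\ldots,\mu_{n,2^n-1}$ are distinct, and a regular SBA if this holds for all $n$. Level $n$ intervals: $\Theta_{n,1}=[\mu_{n,0},\mu_{n,1}]$ if $\mu_{n,0}>-\infty$, else $(\mu_{n,0},\mu_{n,1}]$; $\Theta_{n,l}=(\mu_{n,l-1},\mu_{n,l}]$ for $2\le l\le 2^n-1$; $\Theta_{n,2^n}=(\mu_{n,2^n-1},\mu_{n,2^n}]$ if $\mu_{n,2^n}<\infty$,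 else $(\mu_{n,2^n-1},\infty)$. Then $\bar\Theta_{n,1}=\Theta_{n,1}\cap\operatorname{supp}(G)$, $\bar\Theta_{n,l}=\Theta_{n,l}$ for $2\le l\le 2^n-1$, $\bar\Theta_{n,2^n}=\Theta_{n,2^n}\cap\operatorname{supp}(G)$. *)

theory Defs
  imports "HOL-Probability.Probability"
begin

text \<open>The parameter set Theta is described by its endpoints lo < hi in the extended reals:
  Theta = {x. lo \<le> x \<le> hi}; this covers R, closed half-lines and compact intervals
  with nonempty interior.\<close>
definition Theta :: "ereal \<Rightarrow> ereal \<Rightarrow> real set" where
  "Theta lo hi = {x. lo \<le> ereal x \<and> ereal x \<le> hi}"

definition supp :: "real measure \<Rightarrow> real set" where
  "supp G = {x. \<forall>e>0. emeasure G (ball x e) > 0}"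

definition bG :: "real measure \<Rightarrow> ereal \<Rightarrow> ereal \<Rightarrow> ereal" where
  "bG G a1 a2 =
     (let S = {x::real. a1 < ereal x \<and> ereal x \<le> a2}
      in if measure G S > 0 then ereal ((LINT x:S|G. x) / measure G S) else a1)"

text \<open>sba G lo hi j l = mu_{j,l} (level 0 is auxiliary: mu_{0,0} = inf Theta, mu_{0,1} = sup Theta).\<close>
fun sba :: "real measure \<Rightarrow> ereal \<Rightarrow> ereal \<Rightarrow> nat \<Rightarrow> nat \<Rightarrow> ereal" where
  "sba G lo hi 0 l = (if l = 0 then lo else hi)"
| "sba G lo hi (Suc 0) l =
     (if l = 0 then lo else if l = 1 then ereal (\<integral>x. x \<partial>G) else hi)"
| "sba G lo hi (Suc (Suc j)) l =
     (if l = 0 then lo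
      else if 2 ^ Suc (Suc j) \<le> l then hi
      else if even l then sba G lo hi (Suc j) (l div 2)
      else bG G (sba G lo hi (Suc j) (l div 2)) (sba G lo hi (Suc j) (l div 2 + 1)))"

definition regular_level_SBA :: "real measure \<Rightarrow> ereal \<Rightarrow> ereal \<Rightarrow> nat \<Rightarrow> bool" where
  "regular_level_SBA G lo hi n = inj_on (sba G lo hi n) {1..2 ^ n - 1}"

definition regular_SBA :: "real measure \<Rightarrow> ereal \<Rightarrow> ereal \<Rightarrow> bool" where
  "regular_SBA G lo hi = (\<forall>n\<ge>1. regular_level_SBA G lo hi n)"

definition SBA_interval :: "real measure \<Rightarrow> ereal \<Rightarrow> ereal \<Rightarrow> nat \<Rightarrow> nat \<Rightarrow> real set" where
  "SBA_interval G lo hi n l =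
     (if l = 1 then {x. lo \<le> ereal x \<and> ereal x \<le> sba G lo hi n 1}
      else {x. sba G lo hi n (l - 1) < ereal x \<and> ereal x \<le> sba G lo hi n l})"

definition SBA_interval_bar :: "real measure \<Rightarrow> ereal \<Rightarrow> ereal \<Rightarrow> nat \<Rightarrow> nat \<Rightarrow> real set" where
  "SBA_interval_bar G lo hi n l =
     (if l = 1 \<or> l = 2 ^ n then SBA_interval G lo hi n l \<inter> supp G
      else SBA_interval G lo hi n l)"

definition nondegenerate_interval :: "real set \<Rightarrow> bool" where
  "nondegenerate_interval S = (is_interval S \<and> (\<exists>x\<in>S. \<exists>y\<in>S. x < y))"

end

theory Submission
  imports Defs
begin

text \<open>
  If m is the conditional mean of G on a Borel set S, the integral of x - m over S vanishes;
  so unless G restricted to S is concentrated at m, the support of G meets S on both sides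
  of m. When (c, d] contains a ball inside the interval supp G, this puts b_G(c, d] in the
  interior of supp G, strictly between c and d. By induction on the level, the points of the
  level n SBA therefore increase strictly from inf Theta to sup Theta, and all inner ones are
  interior points of supp G. This gives regularity, and the consecutive intervals cut supp G
  into 2^n non-degenerate pieces.
\<close>

lemma AE_mem_supp:
  assumes "sets G = sets borel"
  shows "AE x in G. x \<in> supp G"
proof -
  define Q where "Q = {(p, q). p \<in> (\<rat>::real set) \<and> q \<in> \<rat> \<and> emeasure G {p<..<q} = 0}"
  have "countable Q"
    by (rule countable_subset[of _ "\<rat> \<times> \<rat>"]) (auto simp: Q_def countable_rat)
  then have null: "(\<Union>pq\<in>Q. {fst pq<..<snd pq}) \<in> null_sets G"
    by (rule null_sets_UN') (use assms in \<open>auto simp: Q_def null_sets_def\<close>)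
  show ?thesis
  proof (rule AE_I'[OF null], safe)
    fix x assume "x \<notin> supp G"
    then obtain e where e: "e > 0" "emeasure G (ball x e) = 0"
      by (auto simp: supp_def not_less)
    obtain p where p: "p \<in> \<rat>" "x - e < p" "p < x" using Rats_dense_in_real[of "x - e" x] e by auto
    obtain q where q: "q \<in> \<rat>" "x < q" "q < x + e" using Rats_dense_in_real[of x "x + e"] e by auto
    have "{p<..<q} \<subseteq> ball x e" using p q by (auto simp: dist_real_def)
    then have "emeasure G {p<..<q} \<le> emeasure G (ball x e)"
      using assms by (intro emeasure_mono) auto
    then have "(p, q) \<in> Q" using p q e by (simp add: Q_def)
    then show "x \<in> (\<Union>pq\<in>Q. {fst pq<..<snd pq})" using p q by force
  qed
qed

lemma supp_subset_closed:
  assumes "sets G = sets borel" "closed C" "emeasure G (UNIV - C) = 0"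
  shows "supp G \<subseteq> C"
proof
  fix x assume x: "x \<in> supp G"
  show "x \<in> C"
  proof (rule ccontr)
    assume "x \<notin> C"
    moreover have "open (UNIV - C)" using assms(2) by auto
    ultimately obtain e where e: "e > 0" "ball x e \<subseteq> UNIV - C"
      by (meson DiffI UNIV_I open_contains_ball)
    then have "emeasure G (ball x e) \<le> emeasure G (UNIV - C)"
      using assms by (intro emeasure_mono) auto
    then show False using x e(1) assms(3) by (auto simp: supp_def)
  qed
qed

lemma closed_Theta: "closed (Theta lo hi)"
proof -
  have "Theta lo hi = {x. lo \<le> ereal x} \<inter> {x. ereal x \<le> hi}" by (auto simp: Theta_def)
  moreover have "closed {x. lo \<le> ereal x}" "closed {x. ereal x \<le> hi}"
    by (auto intro!: closed_Collect_le continuous_on_ereal continuous_on_id)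
  ultimately show ?thesis by auto
qed

lemma emeasure_Diff_singleton_pos:
  assumes "sets G = sets borel" "S \<in> sets borel" "e > 0" "ball y e \<subseteq> S \<inter> supp G"
  shows "emeasure G (S - {z}) > 0"
proof -
  define c where "c = (if z < y then y + e/2 else y - e/2)"
  have "dist y c = e/2" using assms(3) by (simp add: c_def dist_real_def)
  then have "ball c (e/2) \<subseteq> ball y e" "c \<in> ball y e"
    using assms(3) by (auto simp: ball_subset_ball_iff dist_commute)
  moreover have "z \<notin> ball c (e/2)" by (auto simp: c_def dist_real_def abs_if)
  ultimately have sub: "ball c (e/2) \<subseteq> S - {z}" and "c \<in> supp G"
    using assms(4) by blast+
  then have "0 < emeasure G (ball c (e/2))" using assms(3) by (simp add: supp_def)
  also have "\<dots> \<le> emeasure G (S - {z})"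
    using sub assms(1,2) by (intro emeasure_mono) auto
  finally show ?thesis .
qed

lemma emeasure_Diff_conditional_mean_eq_0:
  fixes G :: "real measure" and S :: "real set" and s :: real
  defines "m \<equiv> (LINT x:S|G. x) / measure G S"
  assumes "finite_measure G" "sets G = sets borel" "integrable G (\<lambda>x. x)" "S \<in> sets borel"
    and "measure G S > 0" "s \<noteq> 0" "AE x in G. x \<in> S \<longrightarrow> 0 \<le> s * (x - m)"
  shows "emeasure G (S - {m}) = 0"
proof -
  interpret finite_measure G by (rule assms(2))
  have S: "S \<in> sets G" using assms(3,5) by simp
  define f where "f x = indicator S x * (s * (x - m))" for x
  have int_S: "integrable G (\<lambda>x. indicator S x * x)"
    using integrable_mult_indicator[OF S assms(4)] by simp
  have int_ind: "integrable G (indicator S :: real \<Rightarrow> real)"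
    using S by (simp add: integrable_indicator_iff emeasure_eq_measure)
  have f_eq: "f x = s * (indicator S x * x) - (s * m) * indicator S x" for x
    by (simp add: f_def algebra_simps)
  have int_f: "integrable G f"
    unfolding f_eq by (intro Bochner_Integration.integrable_diff integrable_mult_right int_S int_ind)
  have "integral\<^sup>L G f = s * (LINT x:S|G. x) - s * m * measure G S"
    unfolding f_eq using int_S int_ind S by (simp add: set_lebesgue_integral_def)
  also have "\<dots> = 0" using assms(6) by (simp add: m_def)
  finally have "integral\<^sup>L G f = 0" .
  moreover have "AE x in G. 0 \<le> f x"
    using assms(8) by eventually_elim (simp add: f_def indicator_def)
  ultimately have "AE x in G. f x = 0"
    using integral_nonneg_eq_0_iff_AE[OF int_f] by simp
  then have "AE x in G. x \<notin> S - {m}"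
    by eventually_elim (use assms(7) in \<open>auto simp: f_def\<close>)
  moreover have "S - {m} \<in> sets G" using assms(3,5) by auto
  ultimately show ?thesis
    using AE_iff_measurable[of "S - {m}" G "\<lambda>x. x \<notin> S - {m}"]
      sets_eq_imp_space_eq[OF assms(3)] by auto
qed

lemma conditional_mean_strictly_between:
  fixes G :: "real measure" and S :: "real set"
  defines "m \<equiv> (LINT x:S|G. x) / measure G S"
  assumes "finite_measure G" "sets G = sets borel" "integrable G (\<lambda>x. x)" "S \<in> sets borel"
    and "\<And>z. emeasure G (S - {z}) > 0"
  shows "measure G S > 0" "\<exists>p\<in>S \<inter> supp G. p < m" "\<exists>q\<in>S \<inter> supp G. m < q"
proof -
  interpret finite_measure G by (rule assms(2))
  have "0 < emeasure G (S - {0})" by (rule assms(6))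
  also have "\<dots> \<le> emeasure G S" using assms(3,5) by (intro emeasure_mono) auto
  finally show pos: "measure G S > 0" by (simp add: emeasure_eq_measure)
  have no_extreme: False
    if "s \<noteq> 0" "\<forall>p\<in>S \<inter> supp G. 0 \<le> s * (p - m)" for s :: real
  proof -
    have "AE x in G. x \<in> S \<longrightarrow> 0 \<le> s * (x - m)"
      using AE_mem_supp[OF assms(3)] by eventually_elim (use that in auto)
    then have "emeasure G (S - {m}) = 0"
      using emeasure_Diff_conditional_mean_eq_0[OF assms(2-5) pos that(1)] by (simp add: m_def)
    then show False using assms(6)[of m] by simp
  qed
  show "\<exists>p\<in>S \<inter> supp G. p < m" using no_extreme[of 1] by force
  show "\<exists>q\<in>S \<inter> supp G. m < q" using no_extreme[of "-1"] by force
qed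

lemma mem_interior_is_interval:
  fixes I :: "real set"
  assumes "is_interval I" "r \<in> I" "s \<in> I" "r < y" "y < s"
  shows "y \<in> interior I"
proof -
  have "{r<..<s} \<subseteq> I"
    using assms(1-3) unfolding is_interval_1 by (meson greaterThanLessThan_iff less_imp_le subsetI)
  then have "{r<..<s} \<subseteq> interior I" by (rule interior_maximal) simp
  then show ?thesis using assms(4,5) by auto
qed

lemma nondegenerate_interval_interior_nonempty:
  fixes S :: "real set"
  assumes "nondegenerate_interval S"
  shows "interior S \<noteq> {}"
proof -
  obtain x y where xy: "x \<in> S" "y \<in> S" "x < y" and "is_interval S"
    using assms by (auto simp: nondegenerate_interval_def)
  then have "(x + y) / 2 \<in> interior S"
    using mem_interior_is_interval[OF \<open>is_interval S\<close> xy(1,2)] by simp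
  then show ?thesis by blast
qed

lemma nondegenerate_interval_if_ball_subset:
  assumes "is_interval S" "e > 0" "ball y e \<subseteq> S"
  shows "nondegenerate_interval S"
proof -
  have "y \<in> S" "y + e/2 \<in> S" using assms(2,3) by (auto simp: dist_real_def)
  moreover have "y < y + e/2" using assms(2) by simp
  ultimately show ?thesis using assms(1) unfolding nondegenerate_interval_def by blast
qed

lemma open_ereal_greaterThanLessThan: "open {x::real. c < ereal x \<and> ereal x < d}"
  by (auto intro!: open_Collect_conj open_Collect_less continuous_on_ereal continuous_on_id)

lemma is_interval_ereal_greaterThanAtMost: "is_interval {x::real. c < ereal x \<and> ereal x \<le> d}"
  unfolding is_interval_1 by (metis ereal_less_eq(3) mem_Collect_eq less_le_trans order_trans)

lemma Theta_strict_if_mem_interior: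
  assumes "I \<subseteq> Theta lo hi" "y \<in> interior I"
  shows "lo < ereal y" "ereal y < hi"
proof -
  obtain e where e: "e > 0" "ball y e \<subseteq> I" using assms(2) by (auto simp: mem_interior)
  then have "y - e/2 \<in> I" "y + e/2 \<in> I" by (auto simp: dist_real_def)
  then have "lo \<le> ereal (y - e/2)" "ereal (y + e/2) \<le> hi" using assms(1) by (auto simp: Theta_def)
  moreover have "ereal (y - e/2) < ereal y" "ereal y < ereal (y + e/2)" using e(1) by simp_all
  ultimately show "lo < ereal y" "ereal y < hi" by (meson le_less_trans less_le_trans)+
qed

lemma exists_ereal_between_open_interval:
  fixes U :: "real set"
  assumes "open U" "is_interval U" "U \<noteq> {}" "\<forall>y\<in>U. lo < ereal y \<and> ereal y < hi"
    and "c < d" "c = lo \<or> c \<in> ereal ` U" "d = hi \<or> d \<in> ereal ` U"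
  shows "\<exists>y\<in>U. c < ereal y \<and> ereal y < d"
proof -
  obtain u where u: "u \<in> U" "c < ereal u"
  proof (cases "c = lo")
    case True
    then show ?thesis using that assms(3,4) by blast
  next
    case False
    then obtain r where r: "r \<in> U" "c = ereal r" using assms(6) by blast
    obtain b where "r < b" "{r..<b} \<subseteq> U" using open_right[OF assms(1) r(1), of "r + 1"] by auto
    moreover obtain z where "r < z" "z < b" using dense[OF \<open>r < b\<close>] by blast
    ultimately show ?thesis using that[of z] r(2) by (auto simp: subset_eq)
  qed
  obtain v where v: "v \<in> U" "ereal v < d"
  proof (cases "d = hi")
    case True
    then show ?thesis using that assms(3,4) by blast
  next
    case False
    then obtain r where r: "r \<in> U" "d = ereal r" using assms(7) by blast
    obtain b where "b < r" "{b<..r} \<subseteq> U" using open_left[OF assms(1) r(1), of "r - 1"] by auto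
    moreover obtain z where "b < z" "z < r" using dense[OF \<open>b < r\<close>] by blast
    ultimately show ?thesis using that[of z] r(2) by (auto simp: subset_eq)
  qed
  show ?thesis
  proof (cases "ereal u < d \<or> c < ereal v")
    case True
    then show ?thesis using u v by blast
  next
    case False
    then have "ereal v \<le> c" "d \<le> ereal u" by auto
    then obtain a b where ab: "c = ereal a" "d = ereal b" "v \<le> a" "b \<le> u"
      using assms(5) by (cases c; cases d) auto
    then have "a < b" using assms(5) by simp
    moreover have "v \<le> (a + b) / 2" "(a + b) / 2 \<le> u" using ab(3,4) \<open>a < b\<close> by auto
    ultimately have "(a + b) / 2 \<in> U"
      using assms(2) u(1) v(1) unfolding is_interval_1 by blast
    then show ?thesis using ab(1,2) \<open>a < b\<close> by (intro bexI[of _ "(a + b) / 2"]) auto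
  qed
qed

lemma bG_mem_interior_supp:
  fixes G :: "real measure"
  assumes "finite_measure G" "sets G = sets borel" "integrable G (\<lambda>x. x)" "is_interval (supp G)"
    and "y \<in> interior (supp G)" "c < ereal y" "ereal y < d"
  shows "\<exists>m. bG G c d = ereal m \<and> m \<in> interior (supp G) \<and> c < ereal m \<and> ereal m < d"
proof -
  define S where "S = {x::real. c < ereal x \<and> ereal x \<le> d}"
  define m where "m = (LINT x:S|G. x) / measure G S"
  have S: "S \<in> sets borel" unfolding S_def by measurable
  have "open (interior (supp G) \<inter> {x. c < ereal x \<and> ereal x < d})"
    using open_ereal_greaterThanLessThan by blast
  then obtain e where e: "e > 0" "ball y e \<subseteq> interior (supp G) \<inter> {x. c < ereal x \<and> ereal x < d}"
    using assms(5-7) open_contains_ball_eq by blast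
  then have "ball y e \<subseteq> S \<inter> supp G" using interior_subset by (fastforce simp: S_def)
  note mean = conditional_mean_strictly_between[OF assms(1-3) S
      emeasure_Diff_singleton_pos[OF assms(2) S e(1) this], folded m_def]
  obtain p q where p: "p \<in> S \<inter> supp G" "p < m" and q: "q \<in> S \<inter> supp G" "m < q"
    using mean(2,3) by blast
  have "m \<in> interior (supp G)" using mem_interior_is_interval[OF assms(4)] p q by blast
  moreover have "c < ereal m" using p less_trans[of c "ereal p" "ereal m"] by (simp add: S_def)
  moreover have "ereal m < d" using q less_le_trans[of "ereal m" "ereal q" d] by (simp add: S_def)
  moreover have "bG G c d = ereal m"
    using mean(1) unfolding bG_def Let_def S_def[symmetric] by (simp add: m_def)
  ultimately show ?thesis by blast
qed

lemma bG_UNIV: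
  assumes "prob_space G" "sets G = sets borel"
  shows "bG G (-\<infinity>) \<infinity> = ereal (\<integral>x. x \<partial>G)"
proof -
  interpret prob_space G by (rule assms(1))
  have "space G = UNIV" using sets_eq_imp_space_eq[OF assms(2)] by simp
  then show ?thesis using prob_space by (simp add: bG_def set_lebesgue_integral_def)
qed

lemma sba_first [simp]: "sba G lo hi n 0 = lo"
  by (cases "(G, lo, hi, n, 0::nat)" rule: sba.cases) auto

lemma sba_last [simp]: "sba G lo hi n (2 ^ n) = hi"
  by (cases "(G, lo, hi, n, 2 ^ n::nat)" rule: sba.cases) auto

lemma sba_Suc_even:
  assumes "k \<le> 2 ^ n"
  shows "sba G lo hi (Suc n) (2 * k) = sba G lo hi n k"
proof (cases "k = 0 \<or> k = 2 ^ n")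
  case True
  then show ?thesis using sba_last[of G lo hi "Suc n"] by auto
next
  case False
  then obtain j where "n = Suc j" using assms by (cases n) auto
  then show ?thesis using assms False by simp
qed

lemma sba_Suc_odd:
  assumes "k < 2 ^ Suc n"
  shows "sba G lo hi (Suc (Suc n)) (2 * k + 1) =
    bG G (sba G lo hi (Suc n) k) (sba G lo hi (Suc n) (Suc k))"
proof -
  have "\<not> 2 ^ Suc (Suc n) \<le> 2 * k + 1" using assms by simp
  then show ?thesis by simp
qed

definition sba_increasing_interior :: "real measure \<Rightarrow> ereal \<Rightarrow> ereal \<Rightarrow> nat \<Rightarrow> bool" where
  "sba_increasing_interior G lo hi n \<longleftrightarrow>
     (\<forall>l<2 ^ n. sba G lo hi n l < sba G lo hi n (Suc l)) \<and>
     (\<forall>l\<in>{0<..<2 ^ n}. sba G lo hi n l \<in> ereal ` interior (supp G))"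

lemma sba_exists_interior_between:
  assumes "supp G \<subseteq> Theta lo hi" "is_interval (supp G)" "interior (supp G) \<noteq> {}"
    and "sba_increasing_interior G lo hi n" "k < 2 ^ n"
  shows "\<exists>y\<in>interior (supp G). sba G lo hi n k < ereal y \<and> ereal y < sba G lo hi n (Suc k)"
proof (rule exists_ereal_between_open_interval)
  show "is_interval (interior (supp G))"
    using assms(2) by (simp add: is_interval_convex_1)
  show "\<forall>y\<in>interior (supp G). lo < ereal y \<and> ereal y < hi"
    using Theta_strict_if_mem_interior[OF assms(1)] by blast
  show "sba G lo hi n k = lo \<or> sba G lo hi n k \<in> ereal ` interior (supp G)"
    using assms(4,5) by (cases "k = 0") (auto simp: sba_increasing_interior_def)
  show "sba G lo hi n (Suc k) = hi \<or> sba G lo hi n (Suc k) \<in> ereal ` interior (supp G)"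
    using assms(4,5) by (cases "Suc k = 2 ^ n") (auto simp: sba_increasing_interior_def)
qed (use assms(3-5) in \<open>auto simp: sba_increasing_interior_def\<close>)

lemma sba_Suc_odd_mem_interior:
  assumes "prob_space G" "sets G = sets borel" "integrable G (\<lambda>x. x)"
    and "supp G \<subseteq> Theta lo hi" "is_interval (supp G)" "interior (supp G) \<noteq> {}"
    and "sba_increasing_interior G lo hi n" "k < 2 ^ n"
  shows "\<exists>m. sba G lo hi (Suc n) (2 * k + 1) = ereal m \<and> m \<in> interior (supp G) \<and>
    sba G lo hi n k < ereal m \<and> ereal m < sba G lo hi n (Suc k)"
proof -
  have G: "finite_measure G" using assms(1) by (simp add: prob_space_def)
  obtain y where y: "y \<in> interior (supp G)"
    "sba G lo hi n k < ereal y" "ereal y < sba G lo hi n (Suc k)"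
    using sba_exists_interior_between[OF assms(4-8)] by blast
  show ?thesis
  proof (cases n)
    case 0
    then have "k = 0" using assms(8) by simp
    obtain m where "bG G (-\<infinity>) \<infinity> = ereal m" "m \<in> interior (supp G)"
      using bG_mem_interior_supp[OF G assms(2,3,5) y(1), of "-\<infinity>" \<infinity>] by auto
    then show ?thesis
      using bG_UNIV[OF assms(1,2)] Theta_strict_if_mem_interior[OF assms(4)] \<open>n = 0\<close> \<open>k = 0\<close>
      by auto
  next
    case (Suc j)
    then show ?thesis
      using bG_mem_interior_supp[OF G assms(2,3,5) y] sba_Suc_odd[of k j G lo hi] assms(8) by simp
  qed
qed

lemma sba_increasing_interior_all:
  assumes "prob_space G" "sets G = sets borel" "integrable G (\<lambda>x. x)" "lo < hi"
    and "supp G \<subseteq> Theta lo hi" "is_interval (supp G)" "interior (supp G) \<noteq> {}"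
  shows "sba_increasing_interior G lo hi n"
proof (induction n)
  case 0
  show ?case using assms(4) by (simp add: sba_increasing_interior_def)
next
  case (Suc n)
  note odd = sba_Suc_odd_mem_interior[OF assms(1-3,5-7) Suc.IH]
  have even: "sba G lo hi (Suc n) (2 * k) = sba G lo hi n k" if "k \<le> 2 ^ n" for k
    using sba_Suc_even[OF that] .
  have halves: "k < 2 ^ n" "l = 2 * k \<or> l = 2 * k + 1"
    if "l < 2 ^ Suc n" "k = l div 2" for l k :: nat
    using that by auto
  show ?case unfolding sba_increasing_interior_def
  proof safe
    fix l :: nat assume "l < 2 ^ Suc n"
    then obtain k where k: "k < 2 ^ n" "l = 2 * k \<or> l = 2 * k + 1" using halves[of l "l div 2"] by auto
    obtain m where "sba G lo hi (Suc n) (2 * k + 1) = ereal m"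
      "sba G lo hi n k < ereal m" "ereal m < sba G lo hi n (Suc k)"
      using odd[OF k(1)] by blast
    moreover have "Suc (2 * k + 1) = 2 * Suc k" by simp
    ultimately show "sba G lo hi (Suc n) l < sba G lo hi (Suc n) (Suc l)"
      using k even[of k] even[of "Suc k"] by auto
  next
    fix l :: nat assume "l \<in> {0<..<2 ^ Suc n}"
    then obtain k where k: "k < 2 ^ n" "l = 2 * k \<or> l = 2 * k + 1" using halves[of l "l div 2"] by auto
    show "sba G lo hi (Suc n) l \<in> ereal ` interior (supp G)"
    proof (cases "l = 2 * k")
      case True
      then show ?thesis
        using Suc.IH k(1) \<open>l \<in> _\<close> even[of k] by (auto simp: sba_increasing_interior_def)
    next
      case False
      then show ?thesis using odd[OF k(1)] k(2) by auto
    qed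
  qed
qed

lemma strict_mono_on_sba:
  assumes "sba_increasing_interior G lo hi n"
  shows "strict_mono_on {..2 ^ n} (sba G lo hi n)"
proof (rule strict_mono_onI)
  fix l l' :: nat assume "l \<in> {..2 ^ n}" "l' \<in> {..2 ^ n}" "l < l'"
  then have "Suc l \<le> l'" "l' \<le> 2 ^ n" by auto
  then show "sba G lo hi n l < sba G lo hi n l'"
  proof (induction l' rule: dec_induct)
    case base
    then show ?case using assms by (simp add: sba_increasing_interior_def)
  next
    case (step m)
    then show ?case using assms by (auto simp: sba_increasing_interior_def intro: less_trans)
  qed
qed

lemma regular_level_SBA_if_increasing:
  assumes "sba_increasing_interior G lo hi n"
  shows "regular_level_SBA G lo hi n"
  unfolding regular_level_SBA_def
  by (rule inj_on_subset[OF strict_mono_on_imp_inj_on[OF strict_mono_on_sba[OF assms]]]) auto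

text \<open>For l = 1 the closed lower end lo of Theta_{n,1} is absorbed by supp G \<subseteq> Theta lo hi.\<close>
lemma SBA_interval_bar_eq:
  assumes "supp G \<subseteq> Theta lo hi" "is_interval (supp G)" "sba_increasing_interior G lo hi n"
    and "l \<in> {1..2 ^ n}"
  shows "SBA_interval_bar G lo hi n l = supp G \<inter>
    {x. (if l = 1 then -\<infinity> else sba G lo hi n (l - 1)) < ereal x \<and> ereal x \<le> sba G lo hi n l}"
proof -
  consider "l = 1" | "l = 2 ^ n" "l \<noteq> 1" | "1 < l" "l < 2 ^ n" using assms(4) by fastforce
  then show ?thesis
  proof cases
    case 1
    then show ?thesis
      using assms(1) by (auto simp: SBA_interval_bar_def SBA_interval_def Theta_def)
  next
    case 2
    then show ?thesis by (auto simp: SBA_interval_bar_def SBA_interval_def)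
  next
    case 3
    then have "sba G lo hi n (l - 1) \<in> ereal ` interior (supp G)"
      "sba G lo hi n l \<in> ereal ` interior (supp G)"
      using assms(3) by (auto simp: sba_increasing_interior_def)
    then obtain r s where rs: "sba G lo hi n (l - 1) = ereal r" "sba G lo hi n l = ereal s"
      "r \<in> supp G" "s \<in> supp G"
      using interior_subset by blast
    have "x \<in> supp G" if "r < x" "x \<le> s" for x
      using assms(2) rs(3,4) that unfolding is_interval_1 by (meson less_imp_le)
    then show ?thesis using 3 rs(1,2) by (auto simp: SBA_interval_bar_def SBA_interval_def)
  qed
qed

lemma SBA_interval_bar_disjoint:
  assumes "supp G \<subseteq> Theta lo hi" "is_interval (supp G)" "sba_increasing_interior G lo hi n"
    and "l \<in> {1..2 ^ n}" "l' \<in> {1..2 ^ n}" "l \<noteq> l'"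
  shows "SBA_interval_bar G lo hi n l \<inter> SBA_interval_bar G lo hi n l' = {}"
proof -
  have "SBA_interval_bar G lo hi n i \<inter> SBA_interval_bar G lo hi n j = {}"
    if i: "i \<in> {1..2 ^ n}" and j: "j \<in> {1..2 ^ n}" and "i < j" for i j
  proof -
    have "sba G lo hi n i \<le> sba G lo hi n (j - 1)"
      using strict_mono_onD[OF strict_mono_on_sba[OF assms(3)], of i "j - 1"] i j \<open>i < j\<close>
      by (cases "i = j - 1") (auto intro: less_imp_le)
    moreover have "ereal x \<le> sba G lo hi n i" "sba G lo hi n (j - 1) < ereal x"
      if "x \<in> SBA_interval_bar G lo hi n i" "x \<in> SBA_interval_bar G lo hi n j" for x
      using that SBA_interval_bar_eq[OF assms(1-3) i] SBA_interval_bar_eq[OF assms(1-3) j]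
        i \<open>i < j\<close> by auto
    ultimately show ?thesis by (meson disjoint_iff leD order.trans)
  qed
  then show ?thesis using assms(4-6) by (metis Int_commute linorder_neqE_nat)
qed

lemma SBA_interval_bar_Union:
  assumes "supp G \<subseteq> Theta lo hi" "is_interval (supp G)" "sba_increasing_interior G lo hi n"
  shows "(\<Union>l\<in>{1..2 ^ n}. SBA_interval_bar G lo hi n l) = supp G"
proof
  show "(\<Union>l\<in>{1..2 ^ n}. SBA_interval_bar G lo hi n l) \<subseteq> supp G"
    using SBA_interval_bar_eq[OF assms] by blast
next
  show "supp G \<subseteq> (\<Union>l\<in>{1..2 ^ n}. SBA_interval_bar G lo hi n l)"
  proof
    fix x assume x: "x \<in> supp G"
    define P where "P l \<longleftrightarrow> 1 \<le> l \<and> ereal x \<le> sba G lo hi n l" for l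
    define l where "l = (LEAST l. P l)"
    have "P (2 ^ n)" using x assms(1) by (auto simp: P_def Theta_def)
    then have l: "P l" "l \<le> 2 ^ n" unfolding l_def by (auto intro: LeastI Least_le)
    have "sba G lo hi n (l - 1) < ereal x" if "l \<noteq> 1"
      using not_less_Least[of "l - 1" P, folded l_def] l(1) that by (auto simp: P_def)
    then have "x \<in> SBA_interval_bar G lo hi n l"
      using SBA_interval_bar_eq[OF assms, of l] x l by (auto simp: P_def)
    then show "x \<in> (\<Union>l\<in>{1..2 ^ n}. SBA_interval_bar G lo hi n l)"
      using l by (auto simp: P_def)
  qed
qed

lemma SBA_interval_bar_nondegenerate:
  assumes "supp G \<subseteq> Theta lo hi" "is_interval (supp G)" "interior (supp G) \<noteq> {}"
    and "sba_increasing_interior G lo hi n" "l \<in> {1..2 ^ n}"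
  shows "nondegenerate_interval (SBA_interval_bar G lo hi n l)"
proof -
  define c where "c = (if l = 1 then -\<infinity> else sba G lo hi n (l - 1))"
  define d where "d = sba G lo hi n l"
  have bar: "SBA_interval_bar G lo hi n l = supp G \<inter> {x. c < ereal x \<and> ereal x \<le> d}"
    using SBA_interval_bar_eq[OF assms(1,2,4,5)] by (simp add: c_def d_def)
  have l: "l - 1 < 2 ^ n" "Suc (l - 1) = l" using assms(5) by auto
  obtain y where y: "y \<in> interior (supp G)" "sba G lo hi n (l - 1) < ereal y" "ereal y < d"
    using sba_exists_interior_between[OF assms(1-4) l(1)] unfolding l(2) d_def by blast
  then have "c < ereal y" by (simp add: c_def)
  moreover have "open (interior (supp G) \<inter> {x. c < ereal x \<and> ereal x < d})"
    using open_ereal_greaterThanLessThan by blast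
  ultimately obtain e where e: "e > 0" "ball y e \<subseteq> interior (supp G) \<inter> {x. c < ereal x \<and> ereal x < d}"
    using y open_contains_ball_eq by blast
  have "ball y e \<subseteq> SBA_interval_bar G lo hi n l"
  proof
    fix x assume "x \<in> ball y e"
    then have "x \<in> interior (supp G)" "c < ereal x" "ereal x < d" using e(2) by auto
    then show "x \<in> SBA_interval_bar G lo hi n l" unfolding bar using interior_subset by auto
  qed
  moreover have "is_interval (SBA_interval_bar G lo hi n l)"
    unfolding bar by (intro is_interval_Int assms(2) is_interval_ereal_greaterThanAtMost)
  ultimately show ?thesis using e(1) by (intro nondegenerate_interval_if_ball_subset)
qed

theorem lemma1:
  fixes G :: "real measure" and lo hi :: ereal
  assumes "lo < hi"
    and "prob_space G"
    and "sets G = sets borel"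
    and "emeasure G (UNIV - Theta lo hi) = 0"
    and "integrable G (\<lambda>x. x)"
    and "nondegenerate_interval (supp G)"
  shows "regular_SBA G lo hi \<and>
    (\<forall>n\<ge>1. (\<forall>l\<in>{1..2^n}. nondegenerate_interval (SBA_interval_bar G lo hi n l)) \<and>
      (\<forall>l\<in>{1..2^n}. \<forall>l'\<in>{1..2^n}. l \<noteq> l' \<longrightarrow>
          SBA_interval_bar G lo hi n l \<inter> SBA_interval_bar G lo hi n l' = {}) \<and>
      (\<Union>l\<in>{1..2^n}. SBA_interval_bar G lo hi n l) = supp G)"
proof -
  have supp: "supp G \<subseteq> Theta lo hi"
    using supp_subset_closed[OF assms(3) closed_Theta assms(4)] .
  have interval: "is_interval (supp G)"
    using assms(6) by (simp add: nondegenerate_interval_def)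
  have interior: "interior (supp G) \<noteq> {}"
    using nondegenerate_interval_interior_nonempty[OF assms(6)] .
  have chain: "sba_increasing_interior G lo hi n" for n
    using sba_increasing_interior_all[OF assms(2,3,5,1) supp interval interior] .
  show ?thesis
  proof (intro conjI allI impI ballI)
    show "regular_SBA G lo hi"
      unfolding regular_SBA_def using regular_level_SBA_if_increasing[OF chain] by blast
  next
    fix n l :: nat assume "l \<in> {1..2^n}"
    then show "nondegenerate_interval (SBA_interval_bar G lo hi n l)"
      by (rule SBA_interval_bar_nondegenerate[OF supp interval interior chain])
  next
    fix n l l' :: nat assume "l \<in> {1..2^n}" "l' \<in> {1..2^n}" "l \<noteq> l'"
    then show "SBA_interval_bar G lo hi n l \<inter> SBA_interval_bar G lo hi n l' = {}"
      by (rule SBA_interval_bar_disjoint[OF supp interval chain])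
  next
    fix n :: nat
    show "(\<Union>l\<in>{1..2^n}. SBA_interval_bar G lo hi n l) = supp G"
      by (rule SBA_interval_bar_Union[OF supp interval chain])
  qed
qed

end
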